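(* For the $n\times m$ grid communication graph $G$, the starvation-number satisfies $SN(G)=\min(n,m)$.
   Context: Model. A system consists of pairwise disjoint unit circles in the plane (trajectories) and a communication range $r>0$. Its communication graph $G$ has the circles as vertices, two adjacent iff the distance between their centres is at most $2+r$. Positions on a circle are angles (mod $2\pi$). For an edge $(i,j)$, the link position $\phi_{ij}$ is the angle of the point of $C_i$ closest to $C_j$. A schedule $F=(f,g)$ assigns each circle a starting angle $f(C_i)$ and direction $g(C_i)\in\{1,-1\}$; a robot following it on $C_i$ is at $f(C_i)+g(C_i)2\pi t$ at time $t$. $F$ is a synchronization schedule if $g(C_i)=-g(C_j)$ for adjacent circles and robots following $F$ on adjacent $C_i,C_j$ are at $\phi_{ij},\phi_{ji}$ at exactly the same times. A synchronized communication system (SCS) on $G$ consists of robots, initially one per circle, following a synchronization schedule, with the switching rule: when a robot on $C_i$ reaches $\phi_{ij}$ and $C_j$ is empty, it instantly passes to $C_j$ and follows the schedule of $C_j$; if $C_j$ has a robot, they meet and each stays on its circle. A partial SCS arises by letting some robots leave (possibly at different times); remaining robots never leave. A surviving robot $u$ starves if every time $u$ arrives at a link position $\phi_{ij}$ of its current circle $C_i$, the circle $C_j$ is empty. The starvation-number $SN(G)$ is the maximum possible number of starving robots in a (partial) SCS on $G$. Grid. The $n\times m$ grid communication graph consists of $nm$ unit circles, circle $(i,j)$ in row $i$ (rows horizontal) and column $j$ (columns vertical), centres on a square lattice, circle $(i,j)$ adjacent exactly to the existing circles $(i\pm1,j)$, $(i,j\pm1)$. *)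

theory Defs
  imports Complex_Main
begin

text \<open>A system: a finite set V of indices of unit circles, centres cen :: 'v => complex
  (the plane is identified with the complex numbers) and a communication range r.\<close>

definition comm_adj :: "'v set \<Rightarrow> ('v \<Rightarrow> complex) \<Rightarrow> real \<Rightarrow> 'v \<Rightarrow> 'v \<Rightarrow> bool" where
  "comm_adj V cen r v w \<longleftrightarrow> v \<in> V \<and> w \<in> V \<and> v \<noteq> w \<and> cmod (cen v - cen w) \<le> 2 + r"

text \<open>Link position: angle of the point of the unit circle around cen v closest to the
  circle around cen w, i.e. the direction of cen w - cen v.\<close>
definition link_pos :: "('v \<Rightarrow> complex) \<Rightarrow> 'v \<Rightarrow> 'v \<Rightarrow> real" where
  "link_pos cen v w = Arg (cen w - cen v)"

definition at_pos :: "('v \<Rightarrow> real) \<Rightarrow> ('v \<Rightarrow> real) \<Rightarrow> 'v \<Rightarrow> real \<Rightarrow> real \<Rightarrow> bool" where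
  "at_pos f g v t \<theta> \<longleftrightarrow> (\<exists>k::int. f v + g v * 2 * pi * t = \<theta> + 2 * pi * of_int k)"

definition sync_schedule ::
  "'v set \<Rightarrow> ('v \<Rightarrow> complex) \<Rightarrow> real \<Rightarrow> ('v \<Rightarrow> real) \<Rightarrow> ('v \<Rightarrow> real) \<Rightarrow> bool" where
  "sync_schedule V cen r f g \<longleftrightarrow>
     (\<forall>v\<in>V. g v = 1 \<or> g v = -1) \<and>
     (\<forall>v w. comm_adj V cen r v w \<longrightarrow>
        g v = - g w \<and>
        (\<forall>t. at_pos f g v t (link_pos cen v w) \<longleftrightarrow> at_pos f g w t (link_pos cen w v)))"

text \<open>Robots are indexed by their initial circle. loc u t is the circle of robot u at
  time t (after any switching at time t), None once u has left. leftval loc u t x: the value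
  just before time t is x.\<close>
definition leftval :: "('v \<Rightarrow> real \<Rightarrow> 'v option) \<Rightarrow> 'v \<Rightarrow> real \<Rightarrow> 'v option \<Rightarrow> bool" where
  "leftval loc u t x \<longleftrightarrow> (\<exists>\<epsilon>>0. \<forall>s. t - \<epsilon> < s \<and> s < t \<longrightarrow> loc u s = x)"

definition empty_before :: "'v set \<Rightarrow> ('v \<Rightarrow> real \<Rightarrow> 'v option) \<Rightarrow> real \<Rightarrow> 'v \<Rightarrow> bool" where
  "empty_before V loc t j \<longleftrightarrow> (\<forall>w\<in>V. \<not> leftval loc w t (Some j))"

text \<open>A (partial) synchronized communication system on the system following schedule (f,g):
  start with one robot per circle, robots may leave at arbitrary times (never to return),
  and robots present obey the switching rule.\<close>
definition valid_run ::
  "'v set \<Rightarrow> ('v \<Rightarrow> complex) \<Rightarrow> real \<Rightarrow> ('v \<Rightarrow> real) \<Rightarrow> ('v \<Rightarrow> real)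
     \<Rightarrow> ('v \<Rightarrow> real \<Rightarrow> 'v option) \<Rightarrow> bool" where
  "valid_run V cen r f g loc \<longleftrightarrow>
     (\<forall>u\<in>V. \<forall>t<0. loc u t = Some u) \<and>
     (\<forall>u\<in>V. \<forall>t. \<exists>\<epsilon>>0. \<forall>s. t \<le> s \<and> s < t + \<epsilon> \<longrightarrow> loc u s = loc u t) \<and>
     (\<forall>u\<in>V. \<forall>t. \<exists>x. leftval loc u t x) \<and>
     (\<forall>u\<in>V. \<forall>t s. t \<le> s \<and> loc u t = None \<longrightarrow> loc u s = None) \<and>
     (\<forall>u\<in>V. \<forall>t\<ge>0. \<forall>i. leftval loc u t (Some i) \<and> loc u t \<noteq> None \<longrightarrow>
        ((\<exists>j. comm_adj V cen r i j \<and> at_pos f g i t (link_pos cen i j) \<and> empty_before V loc t j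
              \<and> loc u t = Some j) \<or>
         ((\<nexists>j. comm_adj V cen r i j \<and> at_pos f g i t (link_pos cen i j) \<and> empty_before V loc t j)
              \<and> loc u t = Some i)))"

definition survives :: "'v set \<Rightarrow> ('v \<Rightarrow> real \<Rightarrow> 'v option) \<Rightarrow> 'v \<Rightarrow> bool" where
  "survives V loc u \<longleftrightarrow> u \<in> V \<and> (\<forall>t. loc u t \<noteq> None)"

definition starves ::
  "'v set \<Rightarrow> ('v \<Rightarrow> complex) \<Rightarrow> real \<Rightarrow> ('v \<Rightarrow> real) \<Rightarrow> ('v \<Rightarrow> real)
     \<Rightarrow> ('v \<Rightarrow> real \<Rightarrow> 'v option) \<Rightarrow> 'v \<Rightarrow> bool" where
  "starves V cen r f g loc u \<longleftrightarrow> survives V loc u \<and>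
     (\<forall>t\<ge>0. \<forall>i j. leftval loc u t (Some i) \<and> comm_adj V cen r i j \<and>
        at_pos f g i t (link_pos cen i j) \<longrightarrow> empty_before V loc t j)"

definition starvation_number :: "'v set \<Rightarrow> ('v \<Rightarrow> complex) \<Rightarrow> real \<Rightarrow> nat" where
  "starvation_number V cen r =
     Max {card {u\<in>V. starves V cen r f g loc u} | f g loc.
            sync_schedule V cen r f g \<and> valid_run V cen r f g loc}"

definition grid :: "nat \<Rightarrow> nat \<Rightarrow> (nat \<times> nat) set" where
  "grid n m = {(i, j). i < n \<and> j < m}"

definition grid_adj :: "nat \<times> nat \<Rightarrow> nat \<times> nat \<Rightarrow> bool" where
  "grid_adj v w \<longleftrightarrow>
     (fst v = fst w \<and> (snd w = snd v + 1 \<or> snd v = snd w + 1)) \<or>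
     (snd v = snd w \<and> (fst w = fst v + 1 \<or> fst v = fst w + 1))"

definition grid_centre :: "complex \<Rightarrow> complex \<Rightarrow> nat \<times> nat \<Rightarrow> complex" where
  "grid_centre a b v = a + (of_nat (snd v) + \<i> * of_nat (fst v)) * b"

end

theory Submission
  imports Defs
begin

text \<open>
  Measure the angle of each robot in quarter turns from the lattice direction (its phase).
  Synchronization forces the phase at circle \<open>(i, j)\<close> to be \<open>(-1)^(i+j) \<psi> + 2 j\<close> modulo 4,
  where \<open>\<psi>\<close> is the phase at the corner \<open>(0, 0)\<close>.  Hence all link events of the grid happen
  simultaneously, at the times when the corner phase is an integer \<open>e\<close>, and the links used at
  such an event form a matching: links inside the rows for even \<open>e\<close>, inside the columns for
  odd \<open>e\<close>.  A starving robot never meets anybody, so it simply follows these matchings.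

  Two starving robots in the same row perform the same bouncing motion along that row.  Unfolding
  a path of \<open>M\<close> circles into a cycle of length \<open>2 M\<close>, both advance by one step per event,
  so at some event they stand at the two ends of a used link, and the robot that moves finds the
  other circle occupied.  Thus starving robots lie in distinct rows and columns, and there are at
  most \<open>min n m\<close> of them.  Conversely, for the checkerboard schedule with only the robots on
  the diagonal remaining, those robots keep distinct rows and columns forever and never meet, so
  all \<open>min n m\<close> of them starve.
\<close>

section \<open>Robots bouncing along a path\<close>

text \<open>
  On a path of \<open>M\<close> circles, the link from \<open>x\<close> to \<open>x + 1\<close> is used at the event with value
  \<open>e\<close> iff \<open>link_active e x\<close>.
\<close>

definition link_active :: "int \<Rightarrow> nat \<Rightarrow> bool" where
  "link_active e x \<longleftrightarrow> 4 dvd (e - 2 * int x)"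

definition path_step :: "nat \<Rightarrow> int \<Rightarrow> nat \<Rightarrow> nat" where
  "path_step M e x =
     (if x + 1 < M \<and> link_active e x then x + 1
      else if 0 < x \<and> link_active e (x - 1) then x - 1 else x)"

lemma link_active_double: "link_active (2 * k) x \<longleftrightarrow> even (k - int x)"
proof -
  have "2 * k - 2 * int x = 2 * (k - int x)" by simp
  then show ?thesis
    unfolding link_active_def using dvd_times_left_cancel_iff[of 2 2 "k - int x"] by simp
qed

lemma link_active_even: "link_active e x \<Longrightarrow> even e"
  unfolding link_active_def by (metis dvd_add dvd_trans dvd_triv_left diff_add_cancel even_numeral)

lemma link_active_Suc: "even e \<Longrightarrow> link_active e (Suc x) \<longleftrightarrow> \<not> link_active e x"
  by (elim evenE) (simp add: link_active_double)

lemma link_active_shift: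
  assumes "even e" and "s = 1 \<or> s = -1"
  shows "link_active (e + 2 * s) x \<longleftrightarrow> \<not> link_active e x"
proof -
  obtain k where k: "e = 2 * k" using assms(1) by (elim evenE)
  then have "e + 2 * s = 2 * (k + s)" by simp
  then have "link_active (e + 2 * s) x \<longleftrightarrow> even (k + s - int x)"
    by (simp only: link_active_double)
  moreover have "link_active e x \<longleftrightarrow> even (k - int x)" by (simp add: k link_active_double)
  ultimately show ?thesis using assms(2) by auto
qed

lemma path_step_odd: "odd e \<Longrightarrow> path_step M e x = x"
  unfolding path_step_def using link_active_even by auto

lemma path_step_less: "x < M \<Longrightarrow> path_step M e x < M"
  unfolding path_step_def by auto

lemma path_step_involution:
  assumes "x < M" shows "path_step M e (path_step M e x) = x"
proof (cases "even e")
  case True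
  note Suc_iff = link_active_Suc[OF True]
  show ?thesis
  proof (cases x)
    case 0 then show ?thesis using Suc_iff[of 0] by (auto simp: path_step_def)
  next
    case (Suc y) then show ?thesis
      using Suc_iff[of y] Suc_iff[of "Suc y"] assms by (auto simp: path_step_def)
  qed
qed (simp add: path_step_odd)

lemma path_step_inj:
  "x < M \<Longrightarrow> y < M \<Longrightarrow> path_step M e x = path_step M e y \<Longrightarrow> x = y"
  by (metis path_step_involution)

lemma path_step_eq_Suc_iff: "x + 1 < M \<Longrightarrow> path_step M e x = x + 1 \<longleftrightarrow> link_active e x"
  unfolding path_step_def by auto

lemma path_step_eq_pred_iff:
  assumes "0 < x" shows "path_step M e x = x - 1 \<longleftrightarrow> link_active e (x - 1)"
proof
  assume "link_active e (x - 1)"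
  moreover from this have "\<not> link_active e (Suc (x - 1))"
    using link_active_Suc[OF link_active_even] by blast
  ultimately show "path_step M e x = x - 1" using assms by (simp add: path_step_def)
qed (use assms in \<open>auto simp: path_step_def split: if_splits\<close>)

lemma path_step_cases: "path_step M e x \<in> {x - 1, x, x + 1}"
  unfolding path_step_def by auto

text \<open>
  Position on the unfolded cycle of length \<open>2 M\<close>: a robot about to move up sits at \<open>x\<close>,
  one about to move down at \<open>2 M - 1 - x\<close>.
\<close>

definition path_lift :: "nat \<Rightarrow> int \<Rightarrow> nat \<Rightarrow> int" where
  "path_lift M e x = (if link_active e x then int x else 2 * int M - 1 - int x)"

lemma path_lift_range: "x < M \<Longrightarrow> 0 \<le> path_lift M e x \<and> path_lift M e x < 2 * int M"
  unfolding path_lift_def by auto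

lemma path_lift_step:
  assumes e: "even e" and s: "s = 1 \<or> s = -1" and x: "x < M"
  shows "path_lift M (e + 2 * s) (path_step M e x) = (path_lift M e x + 1) mod (2 * int M)"
proof -
  note shift = link_active_shift[OF e s]
  consider (up) "link_active e x" "x + 1 < M" | (top) "link_active e x" "x + 1 = M"
    | (down) "\<not> link_active e x" "0 < x" | (bottom) "\<not> link_active e x" "x = 0"
    using x by linarith
  then show ?thesis
  proof cases
    case up
    then have "path_step M e x = Suc x" by (simp add: path_step_def)
    moreover have "link_active (e + 2 * s) (Suc x)" using up shift link_active_Suc[OF e] by blast
    ultimately show ?thesis using up by (simp add: path_lift_def)
  next
    case top
    have "\<not> (0 < x \<and> link_active e (x - 1))" using top link_active_Suc[OF e, of "x - 1"] by auto
    then have "path_step M e x = x" using top unfolding path_step_def by auto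
    then show ?thesis using top shift by (simp add: path_lift_def)
  next
    case down
    then have prev: "link_active e (x - 1)" using link_active_Suc[OF e, of "x - 1"] by simp
    then have "path_step M e x = x - 1" using down by (simp add: path_step_def)
    moreover have "(2 * int M - 1 - int x + 1) mod (2 * int M) = 2 * int M - int x"
      using down x by (subst mod_pos_pos_trivial) auto
    ultimately show ?thesis using down prev shift by (simp add: path_lift_def)
  next
    case bottom
    then have "path_step M e x = 0" by (simp add: path_step_def)
    then show ?thesis using bottom shift by (simp add: path_lift_def)
  qed
qed

lemma path_lift_sum_even:
  assumes "even e" shows "even (path_lift M e x + path_lift M e y)"
proof -
  obtain k where k: "e = 2 * k" using assms by (elim evenE)
  have par: "even (path_lift M e z - k)" for z
    by (cases "link_active e z") (auto simp: path_lift_def k link_active_double)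
  have "path_lift M e x + path_lift M e y = (path_lift M e x - k) + (path_lift M e y - k) + 2 * k"
    by simp
  then show ?thesis using par[of x] par[of y] by simp
qed

lemma mod_eq_minus2_cases:
  fixes S N :: int
  assumes "0 \<le> S" "S < 2 * N" "S mod N = N - 2"
  shows "S = N - 2 \<or> S = 2 * N - 2"
proof (cases "S < N")
  case False
  then have "(S - N) mod N = S - N" using assms(2) by (intro mod_pos_pos_trivial) auto
  then show ?thesis using assms(3) by (simp add: mod_diff_right_eq[symmetric])
qed (use assms in simp)

lemma path_step_onto_if_lift_sum:
  assumes x: "x < M" and y: "y < M" and "x \<noteq> y" and e: "even e"
    and sum: "(path_lift M e x + path_lift M e y) mod (2 * int M) = 2 * int M - 2"
  shows "path_step M e x = y \<or> path_step M e y = x"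
proof -
  have "path_lift M e x + path_lift M e y = 2 * int M - 2 \<or>
        path_lift M e x + path_lift M e y = 4 * int M - 2"
    using mod_eq_minus2_cases[OF _ _ sum] path_lift_range[OF x, of e] path_lift_range[OF y, of e] x
    by auto
  then show ?thesis
    using assms link_active_Suc[OF e, of x] link_active_Suc[OF e, of y]
    unfolding path_lift_def path_step_def by (auto split: if_splits)
qed

lemma mod_successor_iterate:
  fixes L :: "nat \<Rightarrow> int"
  assumes "\<And>i. L (Suc i) = (L i + 1) mod N" and "0 \<le> L 0" and "L 0 < N"
  shows "L i = (L 0 + int i) mod N"
proof (induction i)
  case 0 then show ?case using assms(2,3) by simp
next
  case (Suc i) then show ?case using assms(1) by (simp add: mod_add_right_eq ac_simps)
qed

lemma exists_shift_mod_double: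
  fixes A :: int
  assumes "even A" and "0 < M"
  shows "\<exists>i::nat. (A + 2 * int i) mod (2 * int M) = 2 * int M - 2"
proof -
  obtain c where c: "A = 2 * c" using assms(1) by (elim evenE)
  define i where "i = nat ((- 1 - c) mod int M)"
  have "int i = (- 1 - c) mod int M" using assms(2) by (simp add: i_def)
  then have "2 * int i = (2 * (- 1 - c)) mod (2 * int M)" by (simp only: mod_mult_mult1)
  then have "(A + 2 * int i) mod (2 * int M) = (2 * c + 2 * (- 1 - c)) mod (2 * int M)"
    by (simp add: c mod_add_right_eq)
  also have "\<dots> = (2 * int M + (2 * c + 2 * (- 1 - c))) mod (2 * int M)"
    by (simp only: mod_add_self1)
  also have "\<dots> = (2 * int M - 2) mod (2 * int M)" by simp
  also have "\<dots> = 2 * int M - 2" using assms(2) by (intro mod_pos_pos_trivial) auto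
  finally show ?thesis by blast
qed

lemma path_orbit_less:
  assumes "\<And>j. z (Suc j) = path_step M (e j) (z j)" and "z 0 < M"
  shows "z j < M"
  using assms by (induction j) (auto simp: path_step_less)

lemma even_every_other:
  assumes "\<And>j. e (Suc j) = e j + s" and "even (e j0)"
  shows "even (e (j0 + 2 * i :: nat) :: int)"
proof (induction i)
  case (Suc i)
  have "e (j0 + 2 * Suc i) = e (j0 + 2 * i) + 2 * s" by (simp add: assms(1) algebra_simps)
  then show ?case using Suc by simp
qed (simp add: assms(2))

lemma path_lift_every_other_event:
  assumes e: "\<And>j. e (Suc j) = e j + s" and s: "s = 1 \<or> s = -1" and "even (e j0)"
    and z: "\<And>j. z (Suc j) = path_step M (e j) (z j)" "z 0 < M"
  shows "path_lift M (e (j0 + 2 * i)) (z (j0 + 2 * i))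
    = (path_lift M (e j0) (z j0) + int i) mod (2 * int M)"
proof -
  let ?h = "\<lambda>i. j0 + 2 * i"
  have e_h: "e (Suc (Suc (?h i))) = e (?h i) + 2 * s" for i
    by (simp add: e algebra_simps)
  note even_h = even_every_other[OF e \<open>even (e j0)\<close>]
  show ?thesis
  proof (rule mod_successor_iterate[where L = "\<lambda>i. path_lift M (e (?h i)) (z (?h i))", simplified])
    fix i
    have "odd (e (Suc (?h i)))" using e[of "?h i"] even_h[of i] s by auto
    then have "z (Suc (Suc (?h i))) = path_step M (e (?h i)) (z (?h i))"
      by (simp add: z(1) path_step_odd)
    then show "path_lift M (e (Suc (Suc (?h i)))) (z (Suc (Suc (?h i))))
        = (path_lift M (e (?h i)) (z (?h i)) + 1) mod (2 * int M)"
      using path_lift_step[OF even_h s path_orbit_less[OF z], of i "?h i"] by (simp add: e_h)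
  qed (use path_lift_range[OF path_orbit_less[OF z]] in auto)
qed

lemma path_orbits_meet:
  fixes e :: "nat \<Rightarrow> int" and x y :: "nat \<Rightarrow> nat"
  assumes e: "\<And>j. e (Suc j) = e j + s" and s: "s = 1 \<or> s = -1"
    and x: "\<And>j. x (Suc j) = path_step M (e j) (x j)" "x 0 < M"
    and y: "\<And>j. y (Suc j) = path_step M (e j) (y j)" "y 0 < M"
    and "x 0 \<noteq> y 0"
  shows "\<exists>j. path_step M (e j) (x j) = y j \<or> path_step M (e j) (y j) = x j"
proof -
  have distinct: "x j \<noteq> y j" for j
  proof (induction j)
    case (Suc j)
    then show ?case
      unfolding x(1) y(1) using path_step_inj path_orbit_less[OF x] path_orbit_less[OF y] by blast
  qed (rule \<open>x 0 \<noteq> y 0\<close>)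
  obtain j0 where j0: "even (e j0)"
  proof (cases "even (e 0)")
    case False
    then have "even (e 1)" using e[of 0] s by auto
    then show ?thesis by (rule that)
  qed
  let ?L = "\<lambda>z i. path_lift M (e (j0 + 2 * i)) (z (j0 + 2 * i))"
  have "even (?L x 0 + ?L y 0)" using path_lift_sum_even[OF j0] by simp
  moreover have "0 < M" using x(2) by simp
  ultimately obtain i where i: "(?L x 0 + ?L y 0 + 2 * int i) mod (2 * int M) = 2 * int M - 2"
    using exists_shift_mod_double by blast
  have "(?L x i + ?L y i) mod (2 * int M) = (?L x 0 + int i + (?L y 0 + int i)) mod (2 * int M)"
    unfolding path_lift_every_other_event[OF e s j0 x, where i = i]
      path_lift_every_other_event[OF e s j0 y, where i = i]
    by (simp add: mod_add_eq)
  also have "\<dots> = 2 * int M - 2"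
    using i by (simp add: ac_simps)
  finally show ?thesis
    using path_step_onto_if_lift_sum[OF path_orbit_less[OF x] path_orbit_less[OF y] distinct
        even_every_other[OF e j0]] by blast
qed

section \<open>Runs between link events\<close>

lemma real_interval_induct:
  fixes a b :: real
  assumes start: "P a"
    and right: "\<And>t. a \<le> t \<Longrightarrow> t < b \<Longrightarrow> P t \<Longrightarrow> \<exists>\<epsilon>>0. \<forall>s. t \<le> s \<and> s < t + \<epsilon> \<longrightarrow> P s"
    and left: "\<And>t. a < t \<Longrightarrow> t < b \<Longrightarrow> \<forall>s. a \<le> s \<and> s < t \<longrightarrow> P s \<Longrightarrow> P t"
    and s: "a \<le> s" "s < b"
  shows "P s"
proof (rule ccontr)
  assume "\<not> P s"
  define S where "S = {s. a \<le> s \<and> s < b \<and> \<not> P s}"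
  define \<sigma> where "\<sigma> = Inf S"
  have "s \<in> S" using s \<open>\<not> P s\<close> by (simp add: S_def)
  have bdd: "bdd_below S" by (rule bdd_belowI[of _ a]) (simp add: S_def)
  have lower: "\<sigma> \<le> s'" if "s' \<in> S" for s'
    unfolding \<sigma>_def using that bdd by (rule cInf_lower)
  have "a \<le> \<sigma>" unfolding \<sigma>_def using \<open>s \<in> S\<close> by (intro cInf_greatest) (auto simp: S_def)
  have "\<sigma> < b" using lower[OF \<open>s \<in> S\<close>] s by simp
  have below: "P s'" if "a \<le> s'" "s' < \<sigma>" for s'
    using that lower[of s'] \<open>\<sigma> < b\<close> unfolding S_def by force
  have "P \<sigma>"
  proof (cases "\<sigma> = a")
    case False
    then show ?thesis using left[OF _ \<open>\<sigma> < b\<close>] below \<open>a \<le> \<sigma>\<close> by simp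
  qed (simp add: start)
  then obtain \<epsilon> where "\<epsilon> > 0" and \<epsilon>: "\<forall>s'. \<sigma> \<le> s' \<and> s' < \<sigma> + \<epsilon> \<longrightarrow> P s'"
    using right \<open>a \<le> \<sigma>\<close> \<open>\<sigma> < b\<close> by blast
  have "\<sigma> + \<epsilon> \<le> s'" if "s' \<in> S" for s'
    using \<epsilon> lower[OF that] that unfolding S_def by force
  then have "\<sigma> + \<epsilon> \<le> \<sigma>" unfolding \<sigma>_def using \<open>s \<in> S\<close> by (intro cInf_greatest) auto
  then show False using \<open>\<epsilon> > 0\<close> by simp
qed

definition no_link_event ::
  "'v set \<Rightarrow> ('v \<Rightarrow> complex) \<Rightarrow> real \<Rightarrow> ('v \<Rightarrow> real) \<Rightarrow> ('v \<Rightarrow> real) \<Rightarrow> real \<Rightarrow> bool" where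
  "no_link_event V cen r f g t \<longleftrightarrow>
     \<not> (\<exists>i j. comm_adj V cen r i j \<and> at_pos f g i t (link_pos cen i j))"

lemma leftval_unique: "leftval loc u t x \<Longrightarrow> leftval loc u t y \<Longrightarrow> x = y"
proof -
  assume "leftval loc u t x" "leftval loc u t y"
  then obtain \<epsilon>1 \<epsilon>2 where "\<epsilon>1 > 0" "\<epsilon>2 > 0"
    and "\<forall>s. t - \<epsilon>1 < s \<and> s < t \<longrightarrow> loc u s = x" "\<forall>s. t - \<epsilon>2 < s \<and> s < t \<longrightarrow> loc u s = y"
    unfolding leftval_def by blast
  moreover have "t - \<epsilon>1 < t - min \<epsilon>1 \<epsilon>2 / 2" "t - \<epsilon>2 < t - min \<epsilon>1 \<epsilon>2 / 2"
    "t - min \<epsilon>1 \<epsilon>2 / 2 < t"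
    using \<open>\<epsilon>1 > 0\<close> \<open>\<epsilon>2 > 0\<close> by linarith+
  ultimately show "x = y" by metis
qed

lemma valid_run_initial: "valid_run V cen r f g loc \<Longrightarrow> u \<in> V \<Longrightarrow> t < 0 \<Longrightarrow> loc u t = Some u"
  unfolding valid_run_def by blast

lemma valid_run_right_const:
  "valid_run V cen r f g loc \<Longrightarrow> u \<in> V \<Longrightarrow> \<exists>\<epsilon>>0. \<forall>s. t \<le> s \<and> s < t + \<epsilon> \<longrightarrow> loc u s = loc u t"
  unfolding valid_run_def by blast

lemma valid_run_leftval: "valid_run V cen r f g loc \<Longrightarrow> u \<in> V \<Longrightarrow> \<exists>x. leftval loc u t x"
  unfolding valid_run_def by blast

lemma valid_run_switch:
  "valid_run V cen r f g loc \<Longrightarrow> u \<in> V \<Longrightarrow> t \<ge> 0 \<Longrightarrow> leftval loc u t (Some i) \<Longrightarrow>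
   loc u t \<noteq> None \<Longrightarrow>
     (\<exists>j. comm_adj V cen r i j \<and> at_pos f g i t (link_pos cen i j) \<and> empty_before V loc t j
        \<and> loc u t = Some j) \<or>
     ((\<nexists>j. comm_adj V cen r i j \<and> at_pos f g i t (link_pos cen i j) \<and> empty_before V loc t j)
        \<and> loc u t = Some i)"
  unfolding valid_run_def by blast

lemma starves_empty_before:
  "starves V cen r f g loc u \<Longrightarrow> 0 \<le> t \<Longrightarrow> leftval loc u t (Some i) \<Longrightarrow> comm_adj V cen r i j \<Longrightarrow>
   at_pos f g i t (link_pos cen i j) \<Longrightarrow> empty_before V loc t j"
  unfolding starves_def by blast

lemma leftval_loc_if_no_link_event:
  assumes run: "valid_run V cen r f g loc" and "survives V loc u"
    and "no_link_event V cen r f g t"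
  shows "leftval loc u t (loc u t)"
proof -
  have u: "u \<in> V" and alive: "\<And>s. loc u s \<noteq> None" using assms(2) by (auto simp: survives_def)
  obtain x where x: "leftval loc u t x" using valid_run_leftval[OF run u] by blast
  then obtain \<epsilon> where "\<epsilon> > 0" and "\<forall>s. t - \<epsilon> < s \<and> s < t \<longrightarrow> loc u s = x"
    unfolding leftval_def by blast
  then have x_at: "loc u (t - \<epsilon> / 2) = x" by simp
  show ?thesis
  proof (cases "t < 0")
    case True
    then show ?thesis using x x_at \<open>\<epsilon> > 0\<close> valid_run_initial[OF run u] by simp
  next
    case False
    obtain i where "x = Some i" using x_at alive by fastforce
    moreover have "0 \<le> t" using False by simp
    ultimately have "loc u t = Some i"
      using valid_run_switch[OF run u _ _ alive, of t i] x assms(3)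
      unfolding no_link_event_def by blast
    then show ?thesis using x \<open>x = Some i\<close> by simp
  qed
qed

lemma loc_const_if_no_link_events:
  assumes run: "valid_run V cen r f g loc" and surv: "survives V loc u"
    and events: "\<And>s. a < s \<Longrightarrow> s < b \<Longrightarrow> no_link_event V cen r f g s"
    and s: "a \<le> s" "s < b"
  shows "loc u s = loc u a"
proof (rule real_interval_induct[where P = "\<lambda>s. loc u s = loc u a", OF refl _ _ s])
  have u: "u \<in> V" using surv by (simp add: survives_def)
  show "\<exists>\<epsilon>>0. \<forall>s. t \<le> s \<and> s < t + \<epsilon> \<longrightarrow> loc u s = loc u a" if "loc u t = loc u a" for t
    using valid_run_right_const[OF run u, of t] unfolding that .
  show "loc u t = loc u a" if t: "a < t" "t < b"
    and before: "\<forall>s. a \<le> s \<and> s < t \<longrightarrow> loc u s = loc u a" for t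
  proof -
    have "leftval loc u t (loc u a)"
      unfolding leftval_def
    proof (intro exI[of _ "t - a"] conjI allI impI)
      fix s assume "t - (t - a) < s \<and> s < t"
      then have "a \<le> s \<and> s < t" by simp
      then show "loc u s = loc u a" using before by blast
    qed (use t in simp)
    with leftval_loc_if_no_link_event[OF run surv events[OF t]] show ?thesis
      by (rule leftval_unique)
  qed
qed

lemma leftval_if_no_link_events:
  assumes run: "valid_run V cen r f g loc" and surv: "survives V loc u" and "a < b"
    and events: "\<And>s. a < s \<Longrightarrow> s < b \<Longrightarrow> no_link_event V cen r f g s"
  shows "leftval loc u b (loc u a)"
  unfolding leftval_def
proof (intro exI[of _ "b - a"] conjI allI impI)
  fix s assume "b - (b - a) < s \<and> s < b"
  then show "loc u s = loc u a" by (intro loc_const_if_no_link_events[OF run surv events]) auto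
qed (use \<open>a < b\<close> in simp)

section \<open>Link positions on the grid\<close>

definition cong4 :: "real \<Rightarrow> real \<Rightarrow> bool" where
  "cong4 x y \<longleftrightarrow> (\<exists>k::int. x = y + 4 * of_int k)"

lemma cong4_refl: "cong4 x x"
  unfolding cong4_def by (rule exI[of _ 0]) simp

lemma cong4I: "x - y = 4 * of_int k \<Longrightarrow> cong4 x y"
  unfolding cong4_def by (rule exI[of _ k]) simp

lemma cong4E:
  assumes "cong4 x y" obtains k :: int where "x - y = 4 * of_int k"
  using assms unfolding cong4_def by force

lemma cong4_sym: "cong4 x y \<Longrightarrow> cong4 y x"
proof (elim cong4E)
  fix k :: int assume "x - y = 4 * of_int k"
  then show "cong4 y x" by (intro cong4I[of _ _ "- k"]) simp
qed

lemma cong4_trans [trans]: "cong4 x y \<Longrightarrow> cong4 y z \<Longrightarrow> cong4 x z"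
  by (elim cong4E, rule cong4I[of _ _ "_ + _"]) (simp add: algebra_simps)

lemma cong4_diff_left: "cong4 x y \<Longrightarrow> cong4 (a - x) (a - y)"
proof (elim cong4E)
  fix k :: int assume "x - y = 4 * of_int k"
  then show "cong4 (a - x) (a - y)" by (intro cong4I[of _ _ "- k"]) simp
qed

lemma cong4_of_int_iff: "cong4 (of_int a) (of_int c) \<longleftrightarrow> a mod 4 = c mod 4"
proof -
  have "(of_int a :: real) = of_int c + 4 * of_int k \<longleftrightarrow> a = c + 4 * k" for k
    by (metis of_int_eq_iff of_int_add of_int_mult of_int_numeral)
  then show ?thesis unfolding cong4_def mod_eq_dvd_iff dvd_def by (auto simp: algebra_simps)
qed

lemma cong4_signed_iff:
  fixes \<sigma> d :: int
  assumes "\<sigma> = 1 \<or> \<sigma> = -1"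
  shows "cong4 (of_int \<sigma> * \<psi> + 2 * of_nat c) (of_int d) \<longleftrightarrow>
    (\<exists>e::int. \<psi> = of_int e \<and> (\<sigma> * e + 2 * int c) mod 4 = d mod 4)"
proof
  assume "cong4 (of_int \<sigma> * \<psi> + 2 * of_nat c) (of_int d)"
  then obtain k :: int where "of_int \<sigma> * \<psi> + 2 * of_nat c = of_int d + 4 * of_int k"
    unfolding cong4_def by blast
  moreover define e where "e = \<sigma> * (d + 4 * k - 2 * int c)"
  ultimately have "\<psi> = of_int e" "\<sigma> * e + 2 * int c = d + 4 * k"
    using assms by (auto simp: algebra_simps)
  then show "\<exists>e::int. \<psi> = of_int e \<and> (\<sigma> * e + 2 * int c) mod 4 = d mod 4" by auto
next
  assume "\<exists>e::int. \<psi> = of_int e \<and> (\<sigma> * e + 2 * int c) mod 4 = d mod 4"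
  then obtain e :: int where "\<psi> = of_int e" "cong4 (of_int (\<sigma> * e + 2 * int c)) (of_int d)"
    using cong4_of_int_iff by blast
  then show "cong4 (of_int \<sigma> * \<psi> + 2 * of_nat c) (of_int d)" by simp
qed

definition phase :: "('v \<Rightarrow> real) \<Rightarrow> ('v \<Rightarrow> real) \<Rightarrow> complex \<Rightarrow> 'v \<Rightarrow> real \<Rightarrow> real" where
  "phase f g b v t = (f v + g v * 2 * pi * t - Arg b) * 2 / pi"

text \<open>Direction of \<open>w\<close> seen from \<open>v\<close> in quarter turns: east 0, north 1, west 2, south -1.\<close>

definition link_dir :: "nat \<times> nat \<Rightarrow> nat \<times> nat \<Rightarrow> int" where
  "link_dir v w =
     (if fst v = fst w then (if snd w = snd v + 1 then 0 else 2)
      else if fst w = fst v + 1 then 1 else -1)"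

lemma cis_eq_cis_iff: "cis x = cis y \<longleftrightarrow> (\<exists>k::int. x = y + 2 * pi * of_int k)"
proof -
  have "cis x = cis y \<longleftrightarrow> sin x = sin y \<and> cos x = cos y" by (auto simp: complex_eq_iff)
  then show ?thesis by (simp only: sin_cos_eq_iff)
qed

lemma at_pos_iff_cis: "at_pos f g v t \<theta> \<longleftrightarrow> cis (f v + g v * 2 * pi * t) = cis \<theta>"
  unfolding at_pos_def cis_eq_cis_iff by simp

lemma cis_quarter_turns_eq_iff: "cis (A + x * pi / 2) = cis (A + y * pi / 2) \<longleftrightarrow> cong4 x y"
proof -
  have "A + x * pi / 2 = A + y * pi / 2 + 2 * pi * of_int k \<longleftrightarrow> x = y + 4 * of_int k" for k :: int
  proof -
    have "A + x * pi / 2 = A + y * pi / 2 + 2 * pi * of_int k \<longleftrightarrow> (x - y - 4 * of_int k) * pi = 0"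
      by (auto simp: algebra_simps)
    then show ?thesis by (simp add: diff_eq_eq add.commute)
  qed
  then show ?thesis unfolding cis_eq_cis_iff cong4_def by simp
qed

lemma grid_adj_sym: "grid_adj v w \<Longrightarrow> grid_adj w v"
  unfolding grid_adj_def by auto

lemma grid_adj_cases:
  assumes "grid_adj v w"
  obtains (east) "w = (fst v, snd v + 1)" | (west) "v = (fst w, snd w + 1)"
    | (north) "w = (fst v + 1, snd v)" | (south) "v = (fst w + 1, snd w)"
  using assms unfolding grid_adj_def by (metis prod.collapse)

lemma grid_centre_diff:
  assumes "grid_adj v w"
  shows "grid_centre a b w - grid_centre a b v = cis (of_int (link_dir v w) * pi / 2) * b"
  using assms
proof (cases rule: grid_adj_cases)
  case west
  have "cis (of_int 2 * pi / 2) = -1" by simp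
  then show ?thesis using west by (simp add: grid_centre_def link_dir_def algebra_simps)
next
  case south
  have "cis (of_int (-1) * pi / 2) = -\<i>" by simp
  then show ?thesis using south by (simp add: grid_centre_def link_dir_def algebra_simps)
qed (simp_all add: grid_centre_def link_dir_def algebra_simps)

lemma cis_link_pos:
  assumes "b \<noteq> 0" and "grid_adj v w"
  shows "cis (link_pos (grid_centre a b) v w) = cis (Arg b + of_int (link_dir v w) * pi / 2)"
proof -
  define \<theta> where "\<theta> = of_int (link_dir v w) * pi / 2"
  have "cis (link_pos (grid_centre a b) v w) = sgn (cis \<theta> * b)"
    unfolding link_pos_def grid_centre_diff[OF assms(2)] \<theta>_def using assms(1) by (simp add: cis_Arg)
  also have "\<dots> = cis (Arg b + \<theta>)"
    using assms(1) by (simp add: sgn_mult cis_Arg[symmetric] cis_mult add.commute)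
  finally show ?thesis unfolding \<theta>_def .
qed

lemma at_link_pos_iff_phase:
  assumes "b \<noteq> 0" and "grid_adj v w"
  shows "at_pos f g v t (link_pos (grid_centre a b) v w)
    \<longleftrightarrow> cong4 (phase f g b v t) (of_int (link_dir v w))"
proof -
  have "f v + g v * 2 * pi * t = Arg b + phase f g b v t * pi / 2"
    by (simp add: phase_def field_simps)
  then show ?thesis
    unfolding at_pos_iff_cis cis_link_pos[OF assms] by (simp add: cis_quarter_turns_eq_iff)
qed

section \<open>Simultaneous moves on the grid\<close>

text \<open>
  At even events robots move inside their row (changing the column index), at odd events inside
  their column.
\<close>

definition grid_step :: "nat \<Rightarrow> nat \<Rightarrow> int \<Rightarrow> nat \<times> nat \<Rightarrow> nat \<times> nat" where
  "grid_step n m e v = (path_step n (e - 1) (fst v), path_step m e (snd v))"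

definition grid_link_active :: "int \<Rightarrow> nat \<times> nat \<Rightarrow> nat \<times> nat \<Rightarrow> bool" where
  "grid_link_active e v w =
     (if fst v = fst w then link_active e (min (snd v) (snd w))
      else link_active (e - 1) (min (fst v) (fst w)))"

lemma grid_link_active_sym: "grid_link_active e v w = grid_link_active e w v"
  unfolding grid_link_active_def by (simp add: min.commute eq_commute)

lemma in_grid_iff: "v \<in> grid n m \<longleftrightarrow> fst v < n \<and> snd v < m"
  by (cases v) (simp add: grid_def)

lemma grid_step_in_grid: "v \<in> grid n m \<Longrightarrow> grid_step n m e v \<in> grid n m"
  by (cases v) (simp add: grid_def grid_step_def path_step_less)

lemma grid_step_row_or_col:
  "fst (grid_step n m e v) = fst v \<or> snd (grid_step n m e v) = snd v"
  by (cases "even e") (simp_all add: grid_step_def path_step_odd)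

lemma grid_adj_grid_step:
  assumes "grid_step n m e v \<noteq> v" shows "grid_adj v (grid_step n m e v)"
  using assms grid_step_row_or_col[of n m e v]
    path_step_cases[of n "e - 1" "fst v"] path_step_cases[of m e "snd v"]
  unfolding grid_adj_def grid_step_def by (cases v) auto

lemma grid_step_eq_iff_link_active:
  assumes w: "w \<in> grid n m" and "grid_adj v w"
  shows "grid_step n m e v = w \<longleftrightarrow> grid_link_active e v w"
proof -
  have step_eq: "grid_step n m e v = w \<longleftrightarrow>
      path_step n (e - 1) (fst v) = fst w \<and> path_step m e (snd v) = snd w"
    by (simp add: grid_step_def prod_eq_iff)
  have row_still: "path_step n (e - 1) r = r" if "link_active e c" for r c
    using link_active_even[OF that] by (simp add: path_step_odd)
  have col_still: "path_step m e c = c" if "link_active (e - 1) r" for r c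
    using link_active_even[OF that] by (simp add: path_step_odd)
  from \<open>grid_adj v w\<close> show ?thesis
  proof (cases rule: grid_adj_cases)
    case east
    then have "snd v + 1 < m" using w by (simp add: in_grid_iff)
    then show ?thesis unfolding step_eq using east row_still path_step_eq_Suc_iff
      by (auto simp: grid_link_active_def)
  next
    case west
    then show ?thesis unfolding step_eq using row_still path_step_eq_pred_iff[of "snd v" m e]
      by (auto simp: grid_link_active_def)
  next
    case north
    then have "fst v + 1 < n" using w by (simp add: in_grid_iff)
    then show ?thesis unfolding step_eq using north col_still path_step_eq_Suc_iff
      by (auto simp: grid_link_active_def)
  next
    case south
    then show ?thesis unfolding step_eq using col_still path_step_eq_pred_iff[of "fst v" n "e - 1"]
      by (auto simp: grid_link_active_def)
  qed
qed

lemma grid_step_sym: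
  assumes "v \<in> grid n m" "w \<in> grid n m" "grid_step n m e v = w"
  shows "grid_step n m e w = v"
proof (cases "w = v")
  case False
  then have adj: "grid_adj v w" using grid_adj_grid_step assms(3) by blast
  then have "grid_link_active e v w"
    using grid_step_eq_iff_link_active[OF assms(2)] assms(3) by blast
  then have "grid_link_active e w v" by (subst grid_link_active_sym)
  then show ?thesis using grid_step_eq_iff_link_active[OF assms(1) grid_adj_sym[OF adj]] by blast
qed (use assms in simp)

lemma grid_step_col_move:
  assumes "path_step m e (snd v) \<noteq> snd v"
  shows "grid_step n m e v = (fst v, path_step m e (snd v))"
proof -
  have "even e" using assms path_step_odd by blast
  then show ?thesis by (simp add: grid_step_def path_step_odd)
qed

lemma grid_step_row_move:
  assumes "path_step n (e - 1) (fst v) \<noteq> fst v"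
  shows "grid_step n m e v = (path_step n (e - 1) (fst v), snd v)"
proof -
  have "odd e" using assms path_step_odd by fastforce
  then show ?thesis by (simp add: grid_step_def path_step_odd)
qed

definition chess_sign :: "nat \<times> nat \<Rightarrow> int" where
  "chess_sign v = (if even (fst v + snd v) then 1 else -1)"

lemma chess_sign_mod4_iff:
  fixes e r c :: int
  defines "s \<equiv> if even (r + c) then 1 else -1 :: int"
  shows "(s * e + 2 * c) mod 4 = 0 \<longleftrightarrow> 4 dvd (e - 2 * c)"
    and "(s * e + 2 * c) mod 4 = 2 \<longleftrightarrow> 4 dvd (e - 2 * (c - 1))"
    and "(s * e + 2 * c) mod 4 = 1 \<longleftrightarrow> 4 dvd (e - 1 - 2 * r)"
    and "(s * e + 2 * c) mod 4 = 3 \<longleftrightarrow> 4 dvd (e - 1 - 2 * (r - 1))"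
  by (cases "even (r + c)"; simp add: s_def; presburger)+

lemma chess_phase_mod4_iff_link_active:
  assumes "grid_adj v w"
  shows "(chess_sign v * e + 2 * int (snd v)) mod 4 = link_dir v w mod 4 \<longleftrightarrow> grid_link_active e v w"
proof -
  obtain r c where v: "v = (r, c)" by fastforce
  have s: "chess_sign v = (if even (int r + int c) then 1 else -1)"
    by (simp add: v chess_sign_def flip: of_nat_add)
  note iffs = chess_sign_mod4_iff[of "int r" "int c" e, folded s]
  from assms show ?thesis
  proof (cases rule: grid_adj_cases)
    case east
    then show ?thesis
      using iffs(1) by (simp add: v link_dir_def grid_link_active_def link_active_def)
  next
    case west
    then show ?thesis
      using iffs(2) by (auto simp: v link_dir_def grid_link_active_def link_active_def)
  next
    case north
    then show ?thesis
      using iffs(3) by (simp add: v link_dir_def grid_link_active_def link_active_def)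
  next
    case south
    then show ?thesis
      using iffs(4) by (auto simp: v link_dir_def grid_link_active_def link_active_def)
  qed
qed

lemma chess_sign_adj: "grid_adj v w \<Longrightarrow> chess_sign w = - chess_sign v"
  unfolding grid_adj_def chess_sign_def by auto

lemma chess_sign_cases: "chess_sign v = 1 \<or> chess_sign v = -1"
  by (simp add: chess_sign_def)

lemma link_dir_sum_mod4:
  assumes "grid_adj v w"
  shows "4 dvd (link_dir v w + link_dir w v - 2 * int (snd v) - 2 * int (snd w))"
  using assms unfolding grid_adj_def link_dir_def by (auto simp: algebra_simps)

section \<open>Synchronization schedules on the grid\<close>

locale grid_system =
  fixes n m :: nat and a b :: complex and r :: real
  assumes b_nonzero: "b \<noteq> 0"
    and comm_adj_grid: "v \<in> grid n m \<Longrightarrow> w \<in> grid n m \<Longrightarrow>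
      comm_adj (grid n m) (grid_centre a b) r v w \<longleftrightarrow> grid_adj v w"
begin

lemma comm_adj_iff:
  "comm_adj (grid n m) (grid_centre a b) r v w \<longleftrightarrow> v \<in> grid n m \<and> w \<in> grid n m \<and> grid_adj v w"
  using comm_adj_grid unfolding comm_adj_def by blast

lemma sync_phase_sum:
  assumes sync: "sync_schedule (grid n m) (grid_centre a b) r f g"
    and v: "v \<in> grid n m" and w: "w \<in> grid n m" and adj: "grid_adj v w"
  shows "cong4 (phase f g b w t) (of_int (link_dir v w + link_dir w v) - phase f g b v t)"
proof -
  have "comm_adj (grid n m) (grid_centre a b) r v w" using comm_adj_iff v w adj by blast
  then have opposite: "g v = - g w"
    and same_times: "\<And>t. at_pos f g v t (link_pos (grid_centre a b) v w)
      \<longleftrightarrow> at_pos f g w t (link_pos (grid_centre a b) w v)"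
    using sync unfolding sync_schedule_def by blast+
  have "g v \<noteq> 0" using sync v unfolding sync_schedule_def by force
  define t0 where "t0 = (of_int (link_dir v w) * pi / 2 + Arg b - f v) / (g v * 2 * pi)"
  have "phase f g b v t0 = of_int (link_dir v w)"
    using \<open>g v \<noteq> 0\<close> by (simp add: phase_def t0_def field_simps)
  then have "at_pos f g v t0 (link_pos (grid_centre a b) v w)"
    using at_link_pos_iff_phase[OF b_nonzero adj] cong4_refl by simp
  then have "at_pos f g w t0 (link_pos (grid_centre a b) w v)"
    using same_times by blast
  then have at_w: "cong4 (phase f g b w t0) (of_int (link_dir w v))"
    using at_link_pos_iff_phase[OF b_nonzero grid_adj_sym[OF adj]] by blast
  \<comment> \<open>opposite directions make the sum of the two phases constant in time\<close>
  have sum: "phase f g b v s + phase f g b w s = phase f g b v t0 + phase f g b w t0" for s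
    using opposite by (simp add: phase_def field_simps)
  show ?thesis
    using at_w \<open>phase f g b v t0 = _\<close> sum[of t]
    by (auto simp: cong4_def algebra_simps)
qed

lemma sync_phase_normal_form_step:
  assumes sync: "sync_schedule (grid n m) (grid_centre a b) r f g"
    and v: "v \<in> grid n m" and w: "w \<in> grid n m" and adj: "grid_adj v w"
    and at_v: "cong4 (phase f g b v t) (of_int (chess_sign v) * \<psi> + 2 * of_nat (snd v))"
  shows "cong4 (phase f g b w t) (of_int (chess_sign w) * \<psi> + 2 * of_nat (snd w))"
proof -
  define D where "D = link_dir v w + link_dir w v"
  obtain k where k: "D - 2 * int (snd v) - 2 * int (snd w) = 4 * k"
    using link_dir_sum_mod4[OF adj] unfolding D_def by (elim dvdE) simp
  have "cong4 (phase f g b w t) (of_int D - phase f g b v t)"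
    unfolding D_def by (rule sync_phase_sum[OF sync v w adj])
  also have "cong4 \<dots> (of_int D - (of_int (chess_sign v) * \<psi> + 2 * of_nat (snd v)))"
    by (rule cong4_diff_left[OF at_v])
  also have "cong4 \<dots> (of_int (chess_sign w) * \<psi> + 2 * of_nat (snd w))"
  proof (rule cong4I[of _ _ k])
    have "(of_int (D - 2 * int (snd v) - 2 * int (snd w)) :: real) = of_int (4 * k)" using k by simp
    then show "of_int D - (of_int (chess_sign v) * \<psi> + 2 * of_nat (snd v))
        - (of_int (chess_sign w) * \<psi> + 2 * of_nat (snd w)) = 4 * of_int k"
      using chess_sign_adj[OF adj] by (simp add: algebra_simps)
  qed
  finally show ?thesis .
qed

lemma sync_phase_normal_form:
  assumes sync: "sync_schedule (grid n m) (grid_centre a b) r f g" and v: "v \<in> grid n m"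
  shows "cong4 (phase f g b v t)
    (of_int (chess_sign v) * phase f g b (0, 0) t + 2 * of_nat (snd v))"
proof -
  let ?nf = "\<lambda>v. cong4 (phase f g b v t)
    (of_int (chess_sign v) * phase f g b (0, 0) t + 2 * of_nat (snd v))"
  note step = sync_phase_normal_form_step[OF sync]
  have "0 < n" using v by (cases v) (simp add: grid_def)
  have row0: "?nf (0, c)" if "c < m" for c
    using that
  proof (induction c)
    case 0 then show ?case by (simp add: chess_sign_def cong4_refl)
  next
    case (Suc c)
    then show ?case
      using step[of "(0, c)" "(0, Suc c)"] \<open>0 < n\<close> by (simp add: grid_def grid_adj_def)
  qed
  have "?nf (i, c)" if "i < n" "c < m" for i c
    using that
  proof (induction i)
    case 0 then show ?case using row0 by simp
  next
    case (Suc i)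
    then show ?case
      using step[of "(i, c)" "(Suc i, c)"] by (simp add: grid_def grid_adj_def)
  qed
  then show ?thesis using v by (cases v) (simp add: grid_def)
qed

lemma at_link_pos_iff_grid_step:
  assumes w: "w \<in> grid n m"
    and nf: "cong4 (phase f g b v t) (of_int (chess_sign v) * \<psi> + 2 * of_nat (snd v))"
  shows "grid_adj v w \<and> at_pos f g v t (link_pos (grid_centre a b) v w) \<longleftrightarrow>
    (\<exists>e::int. \<psi> = of_int e \<and> grid_step n m e v = w \<and> w \<noteq> v)"
proof -
  have at_link: "at_pos f g v t (link_pos (grid_centre a b) v w) \<longleftrightarrow>
      (\<exists>e::int. \<psi> = of_int e \<and> (chess_sign v * e + 2 * int (snd v)) mod 4 = link_dir v w mod 4)"
    if "grid_adj v w"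
    unfolding at_link_pos_iff_phase[OF b_nonzero that]
      cong4_signed_iff[OF chess_sign_cases, symmetric]
    using nf cong4_sym cong4_trans by blast
  have "grid_adj v w" if "grid_step n m e v = w" "w \<noteq> v" for e
    using that grid_adj_grid_step by blast
  moreover have "w \<noteq> v" if "grid_adj v w" using that unfolding grid_adj_def by auto
  ultimately show ?thesis
    using at_link chess_phase_mod4_iff_link_active grid_step_eq_iff_link_active[OF w] by blast
qed

lemma link_iff_grid_step:
  assumes v: "v \<in> grid n m"
    and nf: "cong4 (phase f g b v t) (of_int (chess_sign v) * \<psi> + 2 * of_nat (snd v))"
  shows "comm_adj (grid n m) (grid_centre a b) r v w
    \<and> at_pos f g v t (link_pos (grid_centre a b) v w) \<longleftrightarrow>
    (\<exists>e::int. \<psi> = of_int e \<and> grid_step n m e v = w \<and> w \<noteq> v)"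
proof (cases "w \<in> grid n m")
  case True
  then show ?thesis using at_link_pos_iff_grid_step[OF True nf] comm_adj_iff v by blast
qed (use comm_adj_iff grid_step_in_grid[OF v] in blast)

lemma link_at_event_iff:
  assumes "v \<in> grid n m"
    and "cong4 (phase f g b v t) (of_int (chess_sign v) * of_int e + 2 * of_nat (snd v))"
  shows "comm_adj (grid n m) (grid_centre a b) r v w
    \<and> at_pos f g v t (link_pos (grid_centre a b) v w) \<longleftrightarrow>
    grid_step n m e v = w \<and> w \<noteq> v"
  using link_iff_grid_step[OF assms] by auto

end

primrec grid_orbit :: "nat \<Rightarrow> nat \<Rightarrow> (nat \<Rightarrow> int) \<Rightarrow> nat \<times> nat \<Rightarrow> nat \<Rightarrow> nat \<times> nat" where
  "grid_orbit n m E u 0 = u"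
| "grid_orbit n m E u (Suc j) = grid_step n m (E j) (grid_orbit n m E u j)"

lemma grid_orbit_in_grid: "u \<in> grid n m \<Longrightarrow> grid_orbit n m E u j \<in> grid n m"
  by (induction j) (simp_all add: grid_step_in_grid)

lemma grid_orbit_same_row: "fst u = fst w \<Longrightarrow> fst (grid_orbit n m E u j) = fst (grid_orbit n m E w j)"
  by (induction j) (simp_all add: grid_step_def)

lemma grid_orbit_same_col: "snd u = snd w \<Longrightarrow> snd (grid_orbit n m E u j) = snd (grid_orbit n m E w j)"
  by (induction j) (simp_all add: grid_step_def)

lemma grid_orbit_distinct_row:
  assumes "u \<in> grid n m" "w \<in> grid n m" "fst u \<noteq> fst w"
  shows "fst (grid_orbit n m E u j) \<noteq> fst (grid_orbit n m E w j)"
proof (induction j)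
  case (Suc j)
  then show ?case
    using grid_orbit_in_grid[OF assms(1)] grid_orbit_in_grid[OF assms(2)] path_step_inj
    by (simp add: grid_step_def in_grid_iff) blast
qed (simp add: assms(3))

lemma grid_orbit_distinct_col:
  assumes "u \<in> grid n m" "w \<in> grid n m" "snd u \<noteq> snd w"
  shows "snd (grid_orbit n m E u j) \<noteq> snd (grid_orbit n m E w j)"
proof (induction j)
  case (Suc j)
  then show ?case
    using grid_orbit_in_grid[OF assms(1)] grid_orbit_in_grid[OF assms(2)] path_step_inj
    by (simp add: grid_step_def in_grid_iff) blast
qed (simp add: assms(3))

lemma grid_orbits_meet_in_row:
  assumes E: "\<And>j. E (Suc j) = E j + s" and s: "s = 1 \<or> s = -1"
    and u: "u \<in> grid n m" and w: "w \<in> grid n m" and "u \<noteq> w" and row: "fst u = fst w"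
  shows "\<exists>j. (grid_step n m (E j) (grid_orbit n m E u j) = grid_orbit n m E w j \<or>
      grid_step n m (E j) (grid_orbit n m E w j) = grid_orbit n m E u j) \<and>
    grid_orbit n m E u j \<noteq> grid_orbit n m E w j"
proof -
  let ?O = "grid_orbit n m E"
  have "snd u \<noteq> snd w" using \<open>u \<noteq> w\<close> row by (simp add: prod_eq_iff)
  then have cols: "snd (?O u j) \<noteq> snd (?O w j)" for j by (rule grid_orbit_distinct_col[OF u w])
  have move: "grid_step n m (E j) (?O x j) = ?O y j"
    if "path_step m (E j) (snd (?O x j)) = snd (?O y j)" "snd (?O x j) \<noteq> snd (?O y j)"
      "fst (?O x j) = fst (?O y j)" for x y j
    using that grid_step_col_move[of m "E j" "?O x j" n] by (simp add: prod_eq_iff)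
  obtain j where "path_step m (E j) (snd (?O u j)) = snd (?O w j) \<or>
      path_step m (E j) (snd (?O w j)) = snd (?O u j)"
    using path_orbits_meet[where e = E and M = m and x = "\<lambda>j. snd (?O u j)"
        and y = "\<lambda>j. snd (?O w j)", OF E s] u w \<open>snd u \<noteq> snd w\<close>
    by (auto simp: grid_step_def in_grid_iff)
  then show ?thesis
    using move cols grid_orbit_same_row[OF row] by metis
qed

lemma grid_orbits_meet_in_col:
  assumes E: "\<And>j. E (Suc j) = E j + s" and s: "s = 1 \<or> s = -1"
    and u: "u \<in> grid n m" and w: "w \<in> grid n m" and "u \<noteq> w" and col: "snd u = snd w"
  shows "\<exists>j. (grid_step n m (E j) (grid_orbit n m E u j) = grid_orbit n m E w j \<or>
      grid_step n m (E j) (grid_orbit n m E w j) = grid_orbit n m E u j) \<and>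
    grid_orbit n m E u j \<noteq> grid_orbit n m E w j"
proof -
  let ?O = "grid_orbit n m E"
  have "fst u \<noteq> fst w" using \<open>u \<noteq> w\<close> col by (simp add: prod_eq_iff)
  then have rows: "fst (?O u j) \<noteq> fst (?O w j)" for j by (rule grid_orbit_distinct_row[OF u w])
  have move: "grid_step n m (E j) (?O x j) = ?O y j"
    if "path_step n (E j - 1) (fst (?O x j)) = fst (?O y j)" "fst (?O x j) \<noteq> fst (?O y j)"
      "snd (?O x j) = snd (?O y j)" for x y j
    using that grid_step_row_move[of n "E j" "?O x j" m] by (simp add: prod_eq_iff)
  have E': "E (Suc j) - 1 = (E j - 1) + s" for j using E by simp
  obtain j where "path_step n (E j - 1) (fst (?O u j)) = fst (?O w j) \<or>
      path_step n (E j - 1) (fst (?O w j)) = fst (?O u j)"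
    using path_orbits_meet[where e = "\<lambda>j. E j - 1" and M = n and x = "\<lambda>j. fst (?O u j)"
        and y = "\<lambda>j. fst (?O w j)", OF E' s] u w \<open>fst u \<noteq> fst w\<close>
    by (auto simp: grid_step_def in_grid_iff)
  then show ?thesis
    using move rows grid_orbit_same_col[OF col] by metis
qed

section \<open>At most one starving robot per row and column\<close>

lemma integer_crossing_times:
  fixes \<Psi>0 s :: real
  assumes s: "s = 1 \<or> s = -1"
  obtains \<tau>0 :: real and si e0 :: int where "0 \<le> \<tau>0" "si = 1 \<or> si = -1" "s = of_int si"
    "\<And>j. \<Psi>0 + 4 * s * (\<tau>0 + real j / 4) = of_int (e0 + si * int j)"
    "\<And>t e. 0 \<le> t \<Longrightarrow> \<Psi>0 + 4 * s * t = of_int e \<Longrightarrow> \<exists>j::nat. t = \<tau>0 + real j / 4"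
proof (cases "s = 1")
  case True
  show ?thesis
  proof (rule that[of "(of_int \<lceil>\<Psi>0\<rceil> - \<Psi>0) / 4" 1 "\<lceil>\<Psi>0\<rceil>"])
    fix t e assume "0 \<le> t" "\<Psi>0 + 4 * s * t = of_int e"
    then have "\<lceil>\<Psi>0\<rceil> \<le> e" "t = (of_int \<lceil>\<Psi>0\<rceil> - \<Psi>0) / 4 + real (nat (e - \<lceil>\<Psi>0\<rceil>)) / 4"
      using True by (simp_all add: ceiling_le_iff field_simps)
    then show "\<exists>j::nat. t = (of_int \<lceil>\<Psi>0\<rceil> - \<Psi>0) / 4 + real j / 4" by blast
  qed (use True in \<open>simp_all add: field_simps\<close>)
next
  case False
  then have s: "s = -1" using s by simp
  show ?thesis
  proof (rule that[of "(\<Psi>0 - of_int \<lfloor>\<Psi>0\<rfloor>) / 4" "-1" "\<lfloor>\<Psi>0\<rfloor>"])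
    fix t e assume "0 \<le> t" "\<Psi>0 + 4 * s * t = of_int e"
    then have "e \<le> \<lfloor>\<Psi>0\<rfloor>" "t = (\<Psi>0 - of_int \<lfloor>\<Psi>0\<rfloor>) / 4 + real (nat (\<lfloor>\<Psi>0\<rfloor> - e)) / 4"
      using s by (simp_all add: le_floor_iff field_simps)
    then show "\<exists>j::nat. t = (\<Psi>0 - of_int \<lfloor>\<Psi>0\<rfloor>) / 4 + real j / 4" by blast
  qed (use s in \<open>simp_all add: field_simps\<close>)
qed

text \<open>
  \<open>\<tau>0 + j / 4\<close> are the link events at nonnegative times and \<open>E j\<close> is the value of the corner
  phase there (see \<open>integer_crossing_times\<close>).
\<close>

locale grid_run = grid_system +
  fixes f g :: "nat \<times> nat \<Rightarrow> real" and loc :: "nat \<times> nat \<Rightarrow> real \<Rightarrow> (nat \<times> nat) option"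
    and \<tau>0 :: real and E :: "nat \<Rightarrow> int" and si :: int
  assumes sync: "sync_schedule (grid n m) (grid_centre a b) r f g"
    and run: "valid_run (grid n m) (grid_centre a b) r f g loc"
    and nonneg_start: "0 \<le> \<tau>0"
    and event_phase: "\<And>j. phase f g b (0, 0) (\<tau>0 + real j / 4) = of_int (E j)"
    and only_events: "\<And>t e. 0 \<le> t \<Longrightarrow> phase f g b (0, 0) t = of_int e \<Longrightarrow> \<exists>j::nat. t = \<tau>0 + real j / 4"
    and E_Suc: "\<And>j. E (Suc j) = E j + si" and si: "si = 1 \<or> si = -1"
begin

abbreviation starving :: "nat \<times> nat \<Rightarrow> bool" where
  "starving \<equiv> starves (grid n m) (grid_centre a b) r f g loc"

lemma link_at_event_time_iff:
  assumes "i \<in> grid n m" and "phase f g b (0, 0) t = of_int e"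
  shows "comm_adj (grid n m) (grid_centre a b) r i j
    \<and> at_pos f g i t (link_pos (grid_centre a b) i j)
    \<longleftrightarrow> grid_step n m e i = j \<and> j \<noteq> i"
  using link_at_event_iff[OF assms(1) sync_phase_normal_form[OF sync assms(1), of t, unfolded assms(2)]] .

lemma no_link_event_between:
  assumes "0 \<le> t" and "\<And>j. t \<noteq> \<tau>0 + real j / 4"
  shows "no_link_event (grid n m) (grid_centre a b) r f g t"
  unfolding no_link_event_def
proof
  assume "\<exists>i j. comm_adj (grid n m) (grid_centre a b) r i j
    \<and> at_pos f g i t (link_pos (grid_centre a b) i j)"
  then obtain i j where link: "comm_adj (grid n m) (grid_centre a b) r i j"
    "at_pos f g i t (link_pos (grid_centre a b) i j)" by blast
  then have "i \<in> grid n m" using comm_adj_iff by blast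
  then obtain e :: int where "phase f g b (0, 0) t = of_int e"
    using link link_iff_grid_step[OF _ sync_phase_normal_form[OF sync]] by blast
  then show False using only_events[OF assms(1)] assms(2) by blast
qed

lemma starving_moves:
  assumes u: "u \<in> grid n m" and starving: "starving u" and t: "0 \<le> t"
    and e: "phase f g b (0, 0) t = of_int e"
    and lv: "leftval loc u t (Some i)" and i: "i \<in> grid n m"
  shows "loc u t = Some (grid_step n m e i)"
proof -
  note link = link_at_event_time_iff[OF i e]
  have "loc u t \<noteq> None" using starving unfolding starves_def survives_def by blast
  note switch = valid_run_switch[OF run u t lv this]
  from switch show ?thesis
  proof (elim disjE conjE exE)
    fix j assume "comm_adj (grid n m) (grid_centre a b) r i j"
      "at_pos f g i t (link_pos (grid_centre a b) i j)" "loc u t = Some j"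
    then show ?thesis using link[of j] by simp
  next
    let ?j = "grid_step n m e i"
    assume none: "\<nexists>j. comm_adj (grid n m) (grid_centre a b) r i j \<and>
        at_pos f g i t (link_pos (grid_centre a b) i j) \<and> empty_before (grid n m) loc t j"
      and "loc u t = Some i"
    have "?j = i"
    proof (rule ccontr)
      assume "?j \<noteq> i"
      then have "comm_adj (grid n m) (grid_centre a b) r i ?j"
        "at_pos f g i t (link_pos (grid_centre a b) i ?j)"
        using link[of ?j] by simp_all
      moreover from this have "empty_before (grid n m) loc t ?j"
        by (rule starves_empty_before[OF starving t lv])
      ultimately show False using none by blast
    qed
    then show ?thesis using \<open>loc u t = Some i\<close> by simp
  qed
qed

lemma leftval_at_first_event:
  assumes alive: "survives (grid n m) loc u"
  shows "leftval loc u \<tau>0 (Some u)"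
proof -
  have u: "u \<in> grid n m" using alive by (simp add: survives_def)
  have init: "leftval loc u 0 (Some u)"
    unfolding leftval_def by (rule exI[of _ 1]) (use valid_run_initial[OF run u] in auto)
  show ?thesis
  proof (cases "\<tau>0 = 0")
    case False
    then have "0 < \<tau>0" using nonneg_start by simp
    have quiet: "no_link_event (grid n m) (grid_centre a b) r f g s" if "0 \<le> s" "s < \<tau>0" for s
      using that by (intro no_link_event_between) auto
    have "leftval loc u 0 (loc u 0)"
      using leftval_loc_if_no_link_event[OF run alive quiet] \<open>0 < \<tau>0\<close> by simp
    then have "loc u 0 = Some u" using leftval_unique init by metis
    moreover have "leftval loc u \<tau>0 (loc u 0)"
      using leftval_if_no_link_events[OF run alive \<open>0 < \<tau>0\<close>] quiet by simp
    ultimately show ?thesis by simp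
  qed (use init in simp)
qed

lemma leftval_at_next_event:
  assumes alive: "survives (grid n m) loc u"
  shows "leftval loc u (\<tau>0 + real (Suc j) / 4) (loc u (\<tau>0 + real j / 4))"
proof (rule leftval_if_no_link_events[OF run alive])
  fix s assume s: "\<tau>0 + real j / 4 < s" "s < \<tau>0 + real (Suc j) / 4"
  show "no_link_event (grid n m) (grid_centre a b) r f g s"
  proof (rule no_link_event_between)
    have "0 \<le> \<tau>0 + real j / 4" using nonneg_start by simp
    then show "0 \<le> s" using s by linarith
    show "s \<noteq> \<tau>0 + real i / 4" for i
      using s by (cases "i \<le> j") (auto simp: not_le dest: of_nat_mono[where 'a = real])
  qed
qed simp

lemma starving_follows_orbit:
  assumes u: "u \<in> grid n m" and starving: "starving u"
  shows "leftval loc u (\<tau>0 + real j / 4) (Some (grid_orbit n m E u j)) \<and>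
    loc u (\<tau>0 + real j / 4) = Some (grid_orbit n m E u (Suc j))"
proof (induction j)
  case 0
  have "leftval loc u \<tau>0 (Some u)"
    using starving by (intro leftval_at_first_event) (simp add: starves_def)
  then show ?case
    using starving_moves[OF u starving nonneg_start _ _ u] event_phase[of 0] by simp
next
  case (Suc j)
  then have lv: "leftval loc u (\<tau>0 + real (Suc j) / 4) (Some (grid_orbit n m E u (Suc j)))"
    using starving leftval_at_next_event[of u j] by (simp add: starves_def)
  then show ?case
    using starving_moves[OF u starving _ event_phase lv grid_orbit_in_grid[OF u]] nonneg_start
      by simp
qed

lemma starving_no_collision:
  assumes u: "u \<in> grid n m" and w: "w \<in> grid n m" and "starving u" and "starving w"
    and step: "grid_step n m (E j) (grid_orbit n m E u j) = grid_orbit n m E w j"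
  shows "grid_orbit n m E w j = grid_orbit n m E u j"
proof (rule ccontr)
  let ?t = "\<tau>0 + real j / 4" and ?i = "grid_orbit n m E u j" and ?k = "grid_orbit n m E w j"
  assume "?k \<noteq> ?i"
  then have "comm_adj (grid n m) (grid_centre a b) r ?i ?k
    \<and> at_pos f g ?i ?t (link_pos (grid_centre a b) ?i ?k)"
    using link_at_event_time_iff[OF grid_orbit_in_grid[OF u] event_phase[of j]] step by blast
  moreover have "leftval loc u ?t (Some ?i)"
    using starving_follows_orbit[OF u \<open>starving u\<close>] by blast
  ultimately have "empty_before (grid n m) loc ?t ?k"
    using starves_empty_before[OF \<open>starving u\<close>] nonneg_start by simp
  moreover have "leftval loc w ?t (Some ?k)"
    using starving_follows_orbit[OF w \<open>starving w\<close>] by blast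
  ultimately show False using w unfolding empty_before_def by blast
qed

lemma starving_distinct_lines:
  assumes "u \<in> grid n m" "w \<in> grid n m" "starving u" "starving w" "u \<noteq> w"
  shows "fst u \<noteq> fst w \<and> snd u \<noteq> snd w"
proof (rule ccontr)
  assume "\<not> (fst u \<noteq> fst w \<and> snd u \<noteq> snd w)"
  then obtain j where "grid_step n m (E j) (grid_orbit n m E u j) = grid_orbit n m E w j \<or>
      grid_step n m (E j) (grid_orbit n m E w j) = grid_orbit n m E u j"
    and "grid_orbit n m E u j \<noteq> grid_orbit n m E w j"
    using grid_orbits_meet_in_row[where E = E, OF E_Suc si assms(1,2,5)]
      grid_orbits_meet_in_col[where E = E, OF E_Suc si assms(1,2,5)] by blast
  then show False using starving_no_collision assms(1-4) by metis
qed

lemma card_starving_le: "card {u \<in> grid n m. starving u} \<le> min n m"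
proof -
  let ?S = "{u \<in> grid n m. starving u}"
  have "inj_on fst ?S" "inj_on snd ?S"
    using starving_distinct_lines unfolding inj_on_def by blast+
  moreover have "fst ` ?S \<subseteq> {..<n}" "snd ` ?S \<subseteq> {..<m}" by (auto simp: in_grid_iff)
  ultimately have "card ?S \<le> n" "card ?S \<le> m"
    using card_inj_on_le[of fst ?S "{..<n}"] card_inj_on_le[of snd ?S "{..<m}"] by simp_all
  then show ?thesis by simp
qed

end

context grid_system
begin

lemma card_starving_le_min:
  assumes sync: "sync_schedule (grid n m) (grid_centre a b) r f g"
    and run: "valid_run (grid n m) (grid_centre a b) r f g loc"
  shows "card {u \<in> grid n m. starves (grid n m) (grid_centre a b) r f g loc u} \<le> min n m"
proof (cases "(0, 0) \<in> grid n m")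
  case False
  then have "grid n m = {}" by (auto simp: grid_def)
  then show ?thesis by simp
next
  case True
  then have "g (0, 0) = 1 \<or> g (0, 0) = -1" using sync unfolding sync_schedule_def by blast
  define \<Psi>0 where "\<Psi>0 = (f (0, 0) - Arg b) * 2 / pi"
  have phase0: "phase f g b (0, 0) t = \<Psi>0 + 4 * g (0, 0) * t" for t
    by (simp add: phase_def \<Psi>0_def field_simps)
  obtain \<tau>0 si e0 where "0 \<le> \<tau>0" "si = 1 \<or> si = -1" "g (0, 0) = of_int si"
    "\<And>j. \<Psi>0 + 4 * g (0, 0) * (\<tau>0 + real j / 4) = of_int (e0 + si * int j)"
    "\<And>t e. 0 \<le> t \<Longrightarrow> \<Psi>0 + 4 * g (0, 0) * t = of_int e \<Longrightarrow> \<exists>j::nat. t = \<tau>0 + real j / 4"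
    using integer_crossing_times[OF \<open>g (0, 0) = 1 \<or> g (0, 0) = -1\<close>, of \<Psi>0] by blast
  then interpret grid_run n m a b r f g loc \<tau>0 "\<lambda>j. e0 + si * int j" si
    by unfold_locales (use sync run in \<open>simp_all add: phase0 algebra_simps\<close>)
  show ?thesis by (rule card_starving_le)
qed

end

section \<open>The diagonal run\<close>

lemma floor_right_const:
  fixes x :: real shows "\<exists>\<epsilon>>0. \<forall>y. x \<le> y \<and> y < x + \<epsilon> \<longrightarrow> \<lfloor>y\<rfloor> = \<lfloor>x\<rfloor>"
proof (intro exI[of _ "of_int \<lfloor>x\<rfloor> + 1 - x"] conjI allI impI)
  fix y :: real assume "x \<le> y \<and> y < x + (of_int \<lfloor>x\<rfloor> + 1 - x)"
  then show "\<lfloor>y\<rfloor> = \<lfloor>x\<rfloor>" by (simp add: floor_eq_iff) linarith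
qed linarith

lemma floor_left_limit:
  fixes x :: real shows "\<exists>\<epsilon>>0. \<forall>y. x - \<epsilon> < y \<and> y < x \<longrightarrow> \<lfloor>y\<rfloor> = \<lceil>x\<rceil> - 1"
proof (intro exI[of _ "x - (of_int \<lceil>x\<rceil> - 1)"] conjI allI impI)
  fix y :: real assume "x - (x - (of_int \<lceil>x\<rceil> - 1)) < y \<and> y < x"
  then show "\<lfloor>y\<rfloor> = \<lceil>x\<rceil> - 1" by (simp add: floor_eq_iff) linarith
qed linarith

text \<open>
  The checkerboard schedule realises the normal form exactly with corner phase \<open>1 / 2 + 4 t\<close>:
  no event at time 0, and the \<open>j\<close>-th event has value \<open>1 + j\<close>.
\<close>

definition checker_start :: "complex \<Rightarrow> nat \<times> nat \<Rightarrow> real" where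
  "checker_start b v = Arg b + of_int (chess_sign v) * pi / 4 + of_nat (snd v) * pi"

definition checker_dir :: "nat \<times> nat \<Rightarrow> real" where
  "checker_dir v = of_int (chess_sign v)"

lemma phase_checker:
  "phase (checker_start b) checker_dir b v t
    = of_int (chess_sign v) * (1 / 2 + 4 * t) + 2 * of_nat (snd v)"
  by (simp add: phase_def checker_start_def checker_dir_def field_simps)

definition events_upto :: "real \<Rightarrow> nat" where
  "events_upto t = nat \<lfloor>4 * t + 1 / 2\<rfloor>"

definition events_before :: "real \<Rightarrow> nat" where
  "events_before t = nat (\<lceil>4 * t + 1 / 2\<rceil> - 1)"

lemma events_at_event:
  assumes "0 \<le> t" and "1 / 2 + 4 * t = of_int e"
  shows "events_upto t = Suc (events_before t)" "1 + int (events_before t) = e"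
proof -
  have "4 * t + 1 / 2 = of_int e" using assms(2) by simp
  moreover have "(0::real) < of_int e" using assms by linarith
  then have "1 \<le> e" by simp
  ultimately show "events_upto t = Suc (events_before t)" "1 + int (events_before t) = e"
    by (simp_all add: events_before_def events_upto_def)
qed

lemma events_off_event:
  assumes "\<nexists>e::int. 1 / 2 + 4 * t = of_int e"
  shows "events_before t = events_upto t"
proof -
  have "4 * t + 1 / 2 \<noteq> of_int \<lfloor>4 * t + 1 / 2\<rfloor>" using assms by (metis add.commute)
  then have "of_int \<lfloor>4 * t + 1 / 2\<rfloor> < 4 * t + 1 / 2"
    using of_int_floor_le[of "4 * t + 1 / 2"] by linarith
  then have "\<lceil>4 * t + 1 / 2\<rceil> = \<lfloor>4 * t + 1 / 2\<rfloor> + 1"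
    by (simp add: ceiling_eq_iff)
  then show ?thesis by (simp add: events_before_def events_upto_def)
qed

definition diagonal :: "nat \<Rightarrow> nat \<Rightarrow> (nat \<times> nat) set" where
  "diagonal n m = {v \<in> grid n m. fst v = snd v}"

text \<open>
  Robots off the diagonal leave at time 0; \<open>events_upto t\<close> counts the events in \<open>[0, t]\<close>.
\<close>

definition diagonal_run :: "nat \<Rightarrow> nat \<Rightarrow> nat \<times> nat \<Rightarrow> real \<Rightarrow> (nat \<times> nat) option" where
  "diagonal_run n m u t =
     (if t < 0 then Some u
      else if u \<in> diagonal n m then Some (grid_orbit n m (\<lambda>j. 1 + int j) u (events_upto t))
      else None)"

lemma diagonal_run_at_event:
  assumes "u \<in> diagonal n m" and "0 \<le> t" and "1 / 2 + 4 * t = of_int e"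
  shows "diagonal_run n m u t
    = Some (grid_step n m e (grid_orbit n m (\<lambda>j. 1 + int j) u (events_before t)))"
  using assms events_at_event[OF assms(2,3)] by (simp add: diagonal_run_def)

lemma diagonal_run_off_event:
  assumes "u \<in> diagonal n m" and "0 \<le> t" and "\<nexists>e::int. 1 / 2 + 4 * t = of_int e"
  shows "diagonal_run n m u t = Some (grid_orbit n m (\<lambda>j. 1 + int j) u (events_before t))"
  using assms events_off_event by (simp add: diagonal_run_def)

lemma diagonal_run_leftval_nonpos: "t \<le> 0 \<Longrightarrow> leftval (diagonal_run n m) u t (Some u)"
  unfolding leftval_def diagonal_run_def by (rule exI[of _ 1]) auto

lemma diagonal_run_leftval_off:
  "u \<notin> diagonal n m \<Longrightarrow> 0 < t \<Longrightarrow> leftval (diagonal_run n m) u t None"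
  unfolding leftval_def diagonal_run_def by (rule exI[of _ t]) auto

lemma diagonal_run_leftval_on:
  assumes u: "u \<in> diagonal n m" and t: "0 \<le> t"
  shows "leftval (diagonal_run n m) u t (Some (grid_orbit n m (\<lambda>j. 1 + int j) u (events_before t)))"
proof (cases "t = 0")
  case True
  then show ?thesis using diagonal_run_leftval_nonpos by (simp add: events_before_def)
next
  case False
  obtain \<epsilon> where "\<epsilon> > 0" and \<epsilon>: "\<forall>y. 4 * t + 1 / 2 - \<epsilon> < y \<and> y < 4 * t + 1 / 2 \<longrightarrow>
      \<lfloor>y\<rfloor> = \<lceil>4 * t + 1 / 2\<rceil> - 1"
    using floor_left_limit by blast
  show ?thesis unfolding leftval_def
  proof (intro exI[of _ "min t (\<epsilon> / 4)"] conjI allI impI)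
    fix s assume s: "t - min t (\<epsilon> / 4) < s \<and> s < t"
    moreover have "min t (\<epsilon> / 4) \<le> t" "min t (\<epsilon> / 4) \<le> \<epsilon> / 4" by simp_all
    ultimately have "4 * t + 1 / 2 - \<epsilon> < 4 * s + 1 / 2" "4 * s + 1 / 2 < 4 * t + 1 / 2" "0 < s"
      by linarith+
    then have "\<lfloor>4 * s + 1 / 2\<rfloor> = \<lceil>4 * t + 1 / 2\<rceil> - 1" "0 < s" using \<epsilon> by blast+
    then show "diagonal_run n m u s = Some (grid_orbit n m (\<lambda>j. 1 + int j) u (events_before t))"
      using u by (simp add: diagonal_run_def events_upto_def events_before_def)
  qed (use False t \<open>\<epsilon> > 0\<close> in simp)
qed

lemma diagonal_run_right_const:
  "\<exists>\<epsilon>>0. \<forall>s. t \<le> s \<and> s < t + \<epsilon> \<longrightarrow> diagonal_run n m u s = diagonal_run n m u t"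
proof (cases "t < 0")
  case True
  then show ?thesis by (intro exI[of _ "- t"]) (auto simp: diagonal_run_def)
next
  case False
  obtain \<epsilon> where "\<epsilon> > 0" and \<epsilon>: "\<forall>y. 4 * t + 1 / 2 \<le> y \<and> y < 4 * t + 1 / 2 + \<epsilon> \<longrightarrow>
      \<lfloor>y\<rfloor> = \<lfloor>4 * t + 1 / 2\<rfloor>"
    using floor_right_const by blast
  show ?thesis
  proof (intro exI[of _ "\<epsilon> / 4"] conjI allI impI)
    fix s assume "t \<le> s \<and> s < t + \<epsilon> / 4"
    then have "4 * t + 1 / 2 \<le> 4 * s + 1 / 2" "4 * s + 1 / 2 < 4 * t + 1 / 2 + \<epsilon>" "\<not> s < 0"
      using False by linarith+
    then have "\<lfloor>4 * s + 1 / 2\<rfloor> = \<lfloor>4 * t + 1 / 2\<rfloor>" "\<not> s < 0" using \<epsilon> by blast+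
    then show "diagonal_run n m u s = diagonal_run n m u t"
      using False by (simp add: diagonal_run_def events_upto_def)
  qed (use \<open>\<epsilon> > 0\<close> in simp)
qed

lemma card_diagonal: "card (diagonal n m) = min n m"
proof -
  have "diagonal n m = (\<lambda>i. (i, i)) ` {..<min n m}" by (auto simp: diagonal_def grid_def)
  moreover have "inj_on (\<lambda>i::nat. (i, i)) {..<min n m}" by (auto simp: inj_on_def)
  ultimately show ?thesis by (simp add: card_image)
qed

lemma diagonal_orbits_apart:
  assumes "u \<in> diagonal n m" "w \<in> diagonal n m" "u \<noteq> w"
  shows "fst (grid_orbit n m E u k) \<noteq> fst (grid_orbit n m E w k) \<and>
    snd (grid_orbit n m E u k) \<noteq> snd (grid_orbit n m E w k)"
proof -
  have "u \<in> grid n m" "w \<in> grid n m" "fst u \<noteq> fst w" "snd u \<noteq> snd w"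
    using assms by (auto simp: diagonal_def prod_eq_iff)
  then show ?thesis using grid_orbit_distinct_row grid_orbit_distinct_col by blast
qed

context grid_system
begin

lemma checker_link_iff:
  assumes "v \<in> grid n m"
  shows "comm_adj (grid n m) (grid_centre a b) r v w \<and>
      at_pos (checker_start b) checker_dir v t (link_pos (grid_centre a b) v w) \<longleftrightarrow>
    (\<exists>e::int. 1 / 2 + 4 * t = of_int e \<and> grid_step n m e v = w \<and> w \<noteq> v)"
proof -
  have "cong4 (phase (checker_start b) checker_dir b v t)
    (of_int (chess_sign v) * (1 / 2 + 4 * t) + 2 * of_nat (snd v))"
    by (simp add: phase_checker cong4_refl)
  then show ?thesis by (rule link_iff_grid_step[OF assms])
qed

lemma checker_link_at_event_iff:
  assumes "v \<in> grid n m" and "1 / 2 + 4 * t = of_int e"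
  shows "comm_adj (grid n m) (grid_centre a b) r v w \<and>
      at_pos (checker_start b) checker_dir v t (link_pos (grid_centre a b) v w) \<longleftrightarrow>
    grid_step n m e v = w \<and> w \<noteq> v"
  using checker_link_iff[OF assms(1)] assms(2) by auto

lemma checker_sync: "sync_schedule (grid n m) (grid_centre a b) r (checker_start b) checker_dir"
  unfolding sync_schedule_def
proof (intro conjI ballI allI impI)
  fix v w assume adj: "comm_adj (grid n m) (grid_centre a b) r v w"
  then have v: "v \<in> grid n m" and w: "w \<in> grid n m" and "grid_adj v w" using comm_adj_iff by blast+
  then show "checker_dir v = - checker_dir w" by (simp add: checker_dir_def chess_sign_adj)
  have "comm_adj (grid n m) (grid_centre a b) r w v"
    using comm_adj_iff v w grid_adj_sym \<open>grid_adj v w\<close> by blast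
  then show "at_pos (checker_start b) checker_dir v t (link_pos (grid_centre a b) v w) \<longleftrightarrow>
      at_pos (checker_start b) checker_dir w t (link_pos (grid_centre a b) w v)" for t
    using adj checker_link_iff[OF v, of w t] checker_link_iff[OF w, of v t] grid_step_sym[OF v w]
      grid_step_sym[OF w v] by metis
qed (simp add: checker_dir_def chess_sign_def)

lemma diagonal_target_empty:
  assumes u: "u \<in> diagonal n m" and t: "0 \<le> t" and e: "1 / 2 + 4 * t = of_int e"
    and moves: "grid_step n m e (grid_orbit n m (\<lambda>j. 1 + int j) u (events_before t))
      \<noteq> grid_orbit n m (\<lambda>j. 1 + int j) u (events_before t)"
  shows "empty_before (grid n m) (diagonal_run n m) t
    (grid_step n m e (grid_orbit n m (\<lambda>j. 1 + int j) u (events_before t)))"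
  unfolding empty_before_def
proof (intro ballI notI)
  let ?O = "grid_orbit n m (\<lambda>j. 1 + int j)" and ?k = "events_before t"
  let ?target = "grid_step n m e (?O u ?k)"
  fix w assume "w \<in> grid n m" and lv: "leftval (diagonal_run n m) w t (Some ?target)"
  have "t \<noteq> 0"
  proof
    assume "t = 0"
    then have "(of_int (2 * e) :: real) = of_int 1" using e by simp
    then show False by (simp only: of_int_eq_iff) presburger
  qed
  then have "0 < t" using t by simp
  show False
  proof (cases "w \<in> diagonal n m")
    case False
    then show False using lv leftval_unique diagonal_run_leftval_off[OF _ \<open>0 < t\<close>] by fastforce
  next
    case diag: True
    then have at_target: "?O w ?k = ?target"
      using lv leftval_unique diagonal_run_leftval_on[OF _ t] by fastforce
    show False
    proof (cases "w = u")
      case False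
      then have "fst (?O u ?k) \<noteq> fst ?target \<and> snd (?O u ?k) \<noteq> snd ?target"
        using diagonal_orbits_apart[OF u diag] at_target by metis
      then show False using grid_step_row_or_col[of n m e "?O u ?k"] by auto
    qed (use at_target moves in simp)
  qed
qed

lemma diagonal_run_switch:
  assumes u: "u \<in> grid n m" and t: "0 \<le> t" and lv: "leftval (diagonal_run n m) u t (Some i)"
    and present: "diagonal_run n m u t \<noteq> None"
  shows "(\<exists>j. comm_adj (grid n m) (grid_centre a b) r i j \<and>
        at_pos (checker_start b) checker_dir i t (link_pos (grid_centre a b) i j) \<and>
        empty_before (grid n m) (diagonal_run n m) t j \<and> diagonal_run n m u t = Some j) \<or>
    ((\<nexists>j. comm_adj (grid n m) (grid_centre a b) r i j \<and>
        at_pos (checker_start b) checker_dir i t (link_pos (grid_centre a b) i j) \<and>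
        empty_before (grid n m) (diagonal_run n m) t j) \<and> diagonal_run n m u t = Some i)"
proof -
  let ?O = "grid_orbit n m (\<lambda>j. 1 + int j)"
  have diag: "u \<in> diagonal n m" using present t by (auto simp: diagonal_run_def split: if_splits)
  then have i: "i = ?O u (events_before t)"
    using lv leftval_unique diagonal_run_leftval_on[OF _ t] by fastforce
  then have "i \<in> grid n m" using diag grid_orbit_in_grid by (simp add: diagonal_def)
  show ?thesis
  proof (cases "\<exists>e::int. 1 / 2 + 4 * t = of_int e")
    case True
    then obtain e :: int where e: "1 / 2 + 4 * t = of_int e" by blast
    note link = checker_link_at_event_iff[OF \<open>i \<in> grid n m\<close> e]
    have run: "diagonal_run n m u t = Some (grid_step n m e i)"
      using diagonal_run_at_event[OF diag t e] i by simp
    show ?thesis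
    proof (cases "grid_step n m e i = i")
      case True
      then show ?thesis using run link by auto
    next
      case False
      then have "empty_before (grid n m) (diagonal_run n m) t (grid_step n m e i)"
        using diagonal_target_empty[OF diag t e] i by simp
      then show ?thesis using run link False by blast
    qed
  next
    case False
    then have "diagonal_run n m u t = Some i"
      using diagonal_run_off_event[OF diag t] i by simp
    then show ?thesis using checker_link_iff[OF \<open>i \<in> grid n m\<close>] False by blast
  qed
qed

lemma diagonal_run_valid:
  "valid_run (grid n m) (grid_centre a b) r (checker_start b) checker_dir (diagonal_run n m)"
  unfolding valid_run_def
proof (intro conjI ballI allI impI)
  fix u t
  show "\<exists>x. leftval (diagonal_run n m) u t x"
    using diagonal_run_leftval_nonpos[of t n m u] diagonal_run_leftval_on[of u n m t]
      diagonal_run_leftval_off[of u n m t] by (cases "t \<le> 0"; cases "u \<in> diagonal n m") auto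
  show "\<exists>\<epsilon>>0. \<forall>s. t \<le> s \<and> s < t + \<epsilon> \<longrightarrow> diagonal_run n m u s = diagonal_run n m u t"
    by (rule diagonal_run_right_const)
next
  fix u t assume "t < (0::real)"
  then show "diagonal_run n m u t = Some u" by (simp add: diagonal_run_def)
next
  fix u t s assume "t \<le> s \<and> diagonal_run n m u t = None"
  then show "diagonal_run n m u s = None" by (auto simp: diagonal_run_def split: if_splits)
qed (use diagonal_run_switch in blast)

lemma diagonal_robot_starves:
  assumes u: "u \<in> diagonal n m"
  shows "starves (grid n m) (grid_centre a b) r (checker_start b) checker_dir (diagonal_run n m) u"
  unfolding starves_def survives_def
proof (intro conjI allI impI)
  show "u \<in> grid n m" using u by (simp add: diagonal_def)
  show "diagonal_run n m u t \<noteq> None" for t using u by (simp add: diagonal_run_def)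
next
  fix t i j assume t: "0 \<le> t" and h: "leftval (diagonal_run n m) u t (Some i) \<and>
    comm_adj (grid n m) (grid_centre a b) r i j \<and>
    at_pos (checker_start b) checker_dir i t (link_pos (grid_centre a b) i j)"
  then have "i \<in> grid n m" using comm_adj_iff by blast
  then obtain e :: int where e: "1 / 2 + 4 * t = of_int e" and "grid_step n m e i = j" "j \<noteq> i"
    using checker_link_iff h by blast
  moreover have "i = grid_orbit n m (\<lambda>j. 1 + int j) u (events_before t)"
    using h leftval_unique diagonal_run_leftval_on[OF u t] by fastforce
  ultimately show "empty_before (grid n m) (diagonal_run n m) t j"
    using diagonal_target_empty[OF u t e] by blast
qed

lemma card_starving_diagonal_run:
  "card {u \<in> grid n m. starves (grid n m) (grid_centre a b) r (checker_start b) checker_dir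
      (diagonal_run n m) u} = min n m"
proof (rule antisym)
  show "card {u \<in> grid n m. starves (grid n m) (grid_centre a b) r (checker_start b) checker_dir
      (diagonal_run n m) u} \<le> min n m"
    by (rule card_starving_le_min[OF checker_sync diagonal_run_valid])
  have "diagonal n m \<subseteq> {u \<in> grid n m. starves (grid n m) (grid_centre a b) r (checker_start b)
      checker_dir (diagonal_run n m) u}"
    using diagonal_robot_starves by (auto simp: diagonal_def)
  then show "min n m \<le> card {u \<in> grid n m. starves (grid n m) (grid_centre a b) r (checker_start b)
      checker_dir (diagonal_run n m) u}"
    unfolding card_diagonal[symmetric] by (rule card_mono[rotated]) (simp add: grid_def)
qed

end

theorem corollary7:
  fixes n m :: nat and a b :: complex and r :: real
  assumes "n \<ge> 1" and "m \<ge> 1" and "r > 0" and "b \<noteq> 0"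
    and "\<forall>v\<in>grid n m. \<forall>w\<in>grid n m. v \<noteq> w \<longrightarrow> cmod (grid_centre a b v - grid_centre a b w) > 2"
    and "\<forall>v\<in>grid n m. \<forall>w\<in>grid n m. comm_adj (grid n m) (grid_centre a b) r v w \<longleftrightarrow> grid_adj v w"
  shows "starvation_number (grid n m) (grid_centre a b) r = min n m"
proof -
  \<comment> \<open>only the adjacency hypothesis and \<open>b \<noteq> 0\<close> are needed\<close>
  interpret grid_system n m a b r
    using assms(4,6) by unfold_locales blast+
  let ?S = "{card {u \<in> grid n m. starves (grid n m) (grid_centre a b) r f g loc u} | f g loc.
      sync_schedule (grid n m) (grid_centre a b) r f g
        \<and> valid_run (grid n m) (grid_centre a b) r f g loc}"
  have upper: "x \<le> min n m" if "x \<in> ?S" for x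
    using that card_starving_le_min by auto
  have attained: "min n m \<in> ?S"
    using card_starving_diagonal_run checker_sync diagonal_run_valid by force
  have "?S \<subseteq> {..min n m}" using upper by (meson atMost_iff subsetI)
  then have "finite ?S" by (rule finite_subset) simp
  then show ?thesis unfolding starvation_number_def using upper attained by (rule Max_eqI)
qed

end
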